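(* Let $V$ be a non-empty measurable subset of $\mathbb R^N$ ($N\ge1$), and let $\beta,\zeta\in C^0(\mathbb R)$ be nondecreasing with $\beta(0)=\zeta(0)=0$. Let $(w_m)_{m\in\mathbb N}$ be measurable functions on $V$ and $\overline\beta,\overline\zeta\in L^2(V)$ such that $\beta(w_m)\to\overline\beta$ and $\zeta(w_m)\to\overline\zeta$ weakly in $L^2(V)$, and such that for some $\varphi\in L^\infty(V)$ with $\varphi>0$ a.e. on $V$, $$\lim_{m\to\infty}\int_V\varphi\,\beta(w_m)\,\zeta(w_m)\,dz=\int_V\varphi\,\overline\beta\,\overline\zeta\,dz.$$ Then for any measurable $w$ on $V$ with $(\beta+\zeta)(w)=\overline\beta+\overline\zeta$ a.e. on $V$, one has $\overline\beta=\beta(w)$ and $\overline\zeta=\zeta(w)$ a.e. on $V$. *)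

theory Defs
  imports "HOL-Analysis.Analysis"
begin

definition L2 :: "'a measure \<Rightarrow> ('a \<Rightarrow> real) \<Rightarrow> bool" where
  "L2 M f \<longleftrightarrow> f \<in> borel_measurable M \<and> integrable M (\<lambda>x. (f x)^2)"

definition Linf :: "'a measure \<Rightarrow> ('a \<Rightarrow> real) \<Rightarrow> bool" where
  "Linf M f \<longleftrightarrow> f \<in> borel_measurable M \<and> (\<exists>C. AE x in M. \<bar>f x\<bar> \<le> C)"

definition weak_L2_conv :: "'a measure \<Rightarrow> (nat \<Rightarrow> 'a \<Rightarrow> real) \<Rightarrow> ('a \<Rightarrow> real) \<Rightarrow> bool" where
  "weak_L2_conv M fs f \<longleftrightarrow> (\<forall>m. L2 M (fs m)) \<and> L2 M f \<and>
     (\<forall>g. L2 M g \<longrightarrow>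
        (\<lambda>m. \<integral>x. fs m x * g x \<partial>M) \<longlonglongrightarrow> (\<integral>x. f x * g x \<partial>M))"

end

theory Submission
  imports Defs
begin

text \<open>A Minty-type argument. Put \<open>b = \<beta>(w)\<close> and \<open>z = \<zeta>(w)\<close>. Monotonicity gives
  \<open>\<phi> (\<beta>(w\<^sub>m) - b) (\<zeta>(w\<^sub>m) - z) \<ge> 0\<close> pointwise; expanding the product, weak convergence
  of the linear terms and the hypothesis on the quadratic term yield in the limit
  \<open>\<integral> \<phi> (\<beta>bar - b) (\<zeta>bar - z) \<ge> 0\<close>. Since \<open>\<beta>bar + \<zeta>bar = b + z\<close>, the integrand equals
  \<open>-\<phi> (\<beta>bar - b)\<^sup>2\<close>, so \<open>\<beta>bar = b\<close> a.e. because \<open>\<phi> > 0\<close>. The one point needing care is that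
  \<open>b, z \<in> L\<^sup>2\<close>: as \<open>\<beta>\<close> and \<open>\<zeta>\<close> vanish at \<open>0\<close> and are nondecreasing, \<open>b\<close> and \<open>z\<close> have the same
  sign, so both are dominated by \<open>|b + z| = |\<beta>bar + \<zeta>bar|\<close>.\<close>

lemma L2_mult_integrable:
  fixes f g :: "'a \<Rightarrow> real"
  assumes "L2 M f" "L2 M g"
  shows "integrable M (\<lambda>x. f x * g x)"
proof (rule Bochner_Integration.integrable_bound[where f = "\<lambda>x. (f x)\<^sup>2 + (g x)\<^sup>2"])
  show "integrable M (\<lambda>x. (f x)\<^sup>2 + (g x)\<^sup>2)" "(\<lambda>x. f x * g x) \<in> borel_measurable M"
    using assms unfolding L2_def by auto
  have "norm (f x * g x) \<le> norm ((f x)\<^sup>2 + (g x)\<^sup>2)" for x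
  proof -
    have "\<bar>f x * g x\<bar> \<le> 2 * \<bar>f x\<bar> * \<bar>g x\<bar>" by (simp add: abs_mult)
    also have "\<dots> \<le> \<bar>f x\<bar>\<^sup>2 + \<bar>g x\<bar>\<^sup>2" by (rule sum_squares_bound)
    finally show ?thesis by simp
  qed
  then show "AE x in M. norm (f x * g x) \<le> norm ((f x)\<^sup>2 + (g x)\<^sup>2)" by simp
qed

lemma L2_add:
  assumes "L2 M f" "L2 M g"
  shows "L2 M (\<lambda>x. f x + g x)"
proof -
  have "integrable M (\<lambda>x. (f x)\<^sup>2 + (g x)\<^sup>2 + 2 * (f x * g x))"
    using assms L2_mult_integrable[OF assms] unfolding L2_def by auto
  then show ?thesis
    using assms unfolding L2_def by (simp add: power2_sum mult.assoc borel_measurable_add)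
qed

lemma L2_diff:
  assumes "L2 M f" "L2 M g"
  shows "L2 M (\<lambda>x. f x - g x)"
proof -
  have "integrable M (\<lambda>x. (f x)\<^sup>2 + (g x)\<^sup>2 - 2 * (f x * g x))"
    using assms L2_mult_integrable[OF assms] unfolding L2_def by auto
  then show ?thesis
    using assms unfolding L2_def by (simp add: power2_diff mult.assoc borel_measurable_diff)
qed

lemma L2_abs_le:
  assumes "L2 M g" "f \<in> borel_measurable M" "AE x in M. \<bar>f x\<bar> \<le> \<bar>g x\<bar>"
  shows "L2 M f"
proof -
  have "integrable M (\<lambda>x. (f x)\<^sup>2)"
  proof (rule Bochner_Integration.integrable_bound[where f = "\<lambda>x. (g x)\<^sup>2"])
    show "integrable M (\<lambda>x. (g x)\<^sup>2)" using assms(1) unfolding L2_def by simp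
    show "(\<lambda>x. (f x)\<^sup>2) \<in> borel_measurable M" using assms(2) by simp
    show "AE x in M. norm ((f x)\<^sup>2) \<le> norm ((g x)\<^sup>2)"
      using assms(3) by eventually_elim (simp add: abs_le_square_iff)
  qed
  then show ?thesis using assms(2) unfolding L2_def by simp
qed

lemma L2_Linf_mult:
  assumes "Linf M \<phi>" "L2 M f"
  shows "L2 M (\<lambda>x. \<phi> x * f x)"
proof -
  obtain C where C: "AE x in M. \<bar>\<phi> x\<bar> \<le> C" using assms(1) unfolding Linf_def by auto
  have "L2 M (\<lambda>x. C * f x)"
    using assms(2) unfolding L2_def by (auto simp: power_mult_distrib)
  moreover have "(\<lambda>x. \<phi> x * f x) \<in> borel_measurable M"
    using assms unfolding Linf_def L2_def by auto
  moreover have "AE x in M. \<bar>\<phi> x * f x\<bar> \<le> \<bar>C * f x\<bar>"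
    using C by eventually_elim (simp add: abs_mult mult_right_mono)
  ultimately show ?thesis by (rule L2_abs_le)
qed

lemma integral_weighted_diff_mult:
  assumes "Linf M \<phi>" "L2 M f" "L2 M g" "L2 M u" "L2 M v"
  shows "(\<integral>x. \<phi> x * (f x - u x) * (g x - v x) \<partial>M)
       = (\<integral>x. \<phi> x * f x * g x \<partial>M) - (\<integral>x. f x * (\<phi> x * v x) \<partial>M)
         - (\<integral>x. g x * (\<phi> x * u x) \<partial>M) + (\<integral>x. \<phi> x * u x * v x \<partial>M)"
proof -
  note L2_Linf_mult[OF assms(1)]
  note integrable =
    L2_mult_integrable[OF this[OF assms(2)] assms(3)]
    L2_mult_integrable[OF assms(2) this[OF assms(5)]]
    L2_mult_integrable[OF assms(3) this[OF assms(4)]]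
    L2_mult_integrable[OF this[OF assms(4)] assms(5)]
  have "(\<integral>x. \<phi> x * (f x - u x) * (g x - v x) \<partial>M)
      = (\<integral>x. ((\<phi> x * f x * g x - f x * (\<phi> x * v x)) - g x * (\<phi> x * u x))
              + \<phi> x * u x * v x \<partial>M)"
    by (rule Bochner_Integration.integral_cong) (auto simp: algebra_simps)
  then show ?thesis using integrable by simp
qed

lemma weak_L2_conv_weighted_product:
  assumes fs: "weak_L2_conv M fs f" and gs: "weak_L2_conv M gs g" and \<phi>: "Linf M \<phi>"
    and lim: "(\<lambda>m. \<integral>x. \<phi> x * fs m x * gs m x \<partial>M) \<longlonglongrightarrow> (\<integral>x. \<phi> x * f x * g x \<partial>M)"
    and u: "L2 M u" and v: "L2 M v"
  shows "(\<lambda>m. \<integral>x. \<phi> x * (fs m x - u x) * (gs m x - v x) \<partial>M)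
           \<longlonglongrightarrow> (\<integral>x. \<phi> x * (f x - u x) * (g x - v x) \<partial>M)"
proof -
  have L2: "L2 M (fs m)" "L2 M (gs m)" "L2 M f" "L2 M g" for m
    using fs gs unfolding weak_L2_conv_def by auto
  have "(\<lambda>m. \<integral>x. fs m x * (\<phi> x * v x) \<partial>M) \<longlonglongrightarrow> (\<integral>x. f x * (\<phi> x * v x) \<partial>M)"
       "(\<lambda>m. \<integral>x. gs m x * (\<phi> x * u x) \<partial>M) \<longlonglongrightarrow> (\<integral>x. g x * (\<phi> x * u x) \<partial>M)"
    using fs gs L2_Linf_mult[OF \<phi> u] L2_Linf_mult[OF \<phi> v] unfolding weak_L2_conv_def by auto
  with lim show ?thesis
    unfolding integral_weighted_diff_mult[OF \<phi> L2(1,2) u v]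
      integral_weighted_diff_mult[OF \<phi> L2(3,4) u v]
    by (intro tendsto_intros)
qed

lemma mono_diff_mult_nonneg:
  fixes \<beta> \<zeta> :: "'a::linorder \<Rightarrow> 'b::linordered_idom"
  assumes "mono \<beta>" "mono \<zeta>"
  shows "0 \<le> (\<beta> s - \<beta> t) * (\<zeta> s - \<zeta> t)"
proof (cases "s \<le> t")
  case True
  then have "\<beta> s \<le> \<beta> t" "\<zeta> s \<le> \<zeta> t" using assms by (simp_all add: monoD)
  then show ?thesis by (simp add: mult_nonpos_nonpos)
next
  case False
  then have "\<beta> t \<le> \<beta> s" "\<zeta> t \<le> \<zeta> s" using assms by (simp_all add: monoD)
  then show ?thesis by simp
qed

lemma mono_vanishing_abs_le_abs_add:
  fixes \<beta> \<zeta> :: "'a::{linorder,zero} \<Rightarrow> 'b::linordered_idom"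
  assumes "mono \<beta>" "mono \<zeta>" "\<beta> 0 = 0" "\<zeta> 0 = 0"
  shows "\<bar>\<beta> t\<bar> \<le> \<bar>\<beta> t + \<zeta> t\<bar>"
proof (cases "0 \<le> t")
  case True
  then have "0 \<le> \<beta> t" "0 \<le> \<zeta> t" using assms by (metis monoD)+
  then show ?thesis by simp
next
  case False
  then have "\<beta> t \<le> 0" "\<zeta> t \<le> 0" using assms by (metis monoD nle_le)+
  then show ?thesis by simp
qed

lemma weak_L2_conv_Minty_inequality:
  fixes \<beta> \<zeta> :: "real \<Rightarrow> real"
  assumes mono: "mono \<beta>" "mono \<zeta>"
    and \<beta>_weak: "weak_L2_conv M (\<lambda>m x. \<beta> (ws m x)) \<beta>bar"
    and \<zeta>_weak: "weak_L2_conv M (\<lambda>m x. \<zeta> (ws m x)) \<zeta>bar"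
    and \<phi>: "Linf M \<phi>" "AE x in M. 0 \<le> \<phi> x"
    and lim: "(\<lambda>m. \<integral>x. \<phi> x * \<beta> (ws m x) * \<zeta> (ws m x) \<partial>M)
               \<longlonglongrightarrow> (\<integral>x. \<phi> x * \<beta>bar x * \<zeta>bar x \<partial>M)"
    and w_L2: "L2 M (\<lambda>x. \<beta> (w x))" "L2 M (\<lambda>x. \<zeta> (w x))"
  shows "0 \<le> (\<integral>x. \<phi> x * (\<beta>bar x - \<beta> (w x)) * (\<zeta>bar x - \<zeta> (w x)) \<partial>M)"
proof (rule LIMSEQ_le_const)
  show "(\<lambda>m. \<integral>x. \<phi> x * (\<beta> (ws m x) - \<beta> (w x)) * (\<zeta> (ws m x) - \<zeta> (w x)) \<partial>M)
          \<longlonglongrightarrow> (\<integral>x. \<phi> x * (\<beta>bar x - \<beta> (w x)) * (\<zeta>bar x - \<zeta> (w x)) \<partial>M)"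
    using weak_L2_conv_weighted_product[OF \<beta>_weak \<zeta>_weak \<phi>(1) lim w_L2] by simp
  have "0 \<le> (\<integral>x. \<phi> x * (\<beta> (ws m x) - \<beta> (w x)) * (\<zeta> (ws m x) - \<zeta> (w x)) \<partial>M)" for m
    using \<phi>(2) by (intro integral_nonneg_AE, eventually_elim)
      (simp add: mult.assoc mono_diff_mult_nonneg[OF mono])
  then show "\<exists>N. \<forall>m\<ge>N. 0 \<le> (\<integral>x. \<phi> x * (\<beta> (ws m x) - \<beta> (w x)) * (\<zeta> (ws m x) - \<zeta> (w x)) \<partial>M)"
    by blast
qed

lemma L2_mono_comp_if_sum_L2:
  fixes \<beta> \<zeta> :: "real \<Rightarrow> real"
  assumes "mono \<beta>" "mono \<zeta>" "\<beta> 0 = 0" "\<zeta> 0 = 0" "continuous_on UNIV \<beta>"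
    and "w \<in> borel_measurable M" "L2 M s" "AE x in M. \<beta> (w x) + \<zeta> (w x) = s x"
  shows "L2 M (\<lambda>x. \<beta> (w x))"
proof (rule L2_abs_le[OF assms(7) borel_measurable_continuous_on[OF assms(5,6)]])
  show "AE x in M. \<bar>\<beta> (w x)\<bar> \<le> \<bar>s x\<bar>"
    using assms(8) by eventually_elim (metis mono_vanishing_abs_le_abs_add[OF assms(1-4)])
qed

lemma AE_eq_0_if_weighted_square_integral_nonpos:
  assumes \<phi>: "Linf M \<phi>" "AE x in M. 0 < \<phi> x" and f: "L2 M f"
    and "(\<integral>x. \<phi> x * (f x)\<^sup>2 \<partial>M) \<le> 0"
  shows "AE x in M. f x = 0"
proof -
  have int: "integrable M (\<lambda>x. \<phi> x * (f x)\<^sup>2)"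
    using L2_mult_integrable[OF L2_Linf_mult[OF \<phi>(1) f] f] by (simp add: power2_eq_square mult.assoc)
  have nonneg: "AE x in M. 0 \<le> \<phi> x * (f x)\<^sup>2"
    using \<phi>(2) by eventually_elim simp
  with assms(4) have "(\<integral>x. \<phi> x * (f x)\<^sup>2 \<partial>M) = 0"
    using integral_nonneg_AE by (metis order_antisym)
  then have "AE x in M. \<phi> x * (f x)\<^sup>2 = 0"
    using integral_nonneg_eq_0_iff_AE[OF int nonneg] by simp
  with \<phi>(2) show ?thesis by eventually_elim simp
qed

lemma AE_eq_if_weighted_cross_integral_nonneg:
  assumes \<phi>: "Linf M \<phi>" "AE x in M. 0 < \<phi> x"
    and L2: "L2 M f" "L2 M g" "L2 M u" "L2 M v"
    and sum_eq: "AE x in M. u x + v x = f x + g x"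
    and "0 \<le> (\<integral>x. \<phi> x * (f x - u x) * (g x - v x) \<partial>M)"
  shows "AE x in M. f x = u x"
proof -
  have "(\<integral>x. \<phi> x * (f x - u x) * (g x - v x) \<partial>M) = (\<integral>x. - (\<phi> x * (f x - u x)\<^sup>2) \<partial>M)"
  proof (rule integral_cong_AE)
    show "(\<lambda>x. \<phi> x * (f x - u x) * (g x - v x)) \<in> borel_measurable M"
         "(\<lambda>x. - (\<phi> x * (f x - u x)\<^sup>2)) \<in> borel_measurable M"
      using \<phi>(1) L2 unfolding Linf_def L2_def by auto
    show "AE x in M. \<phi> x * (f x - u x) * (g x - v x) = - (\<phi> x * (f x - u x)\<^sup>2)"
      using sum_eq
    proof eventually_elim
      case (elim x)
      then have "g x - v x = - (f x - u x)" by linarith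
      then show ?case by (simp only: power2_eq_square mult_minus_right)
    qed
  qed
  with assms(8) have "(\<integral>x. \<phi> x * (f x - u x)\<^sup>2 \<partial>M) \<le> 0" by simp
  then have "AE x in M. f x - u x = 0"
    by (rule AE_eq_0_if_weighted_square_integral_nonpos[OF \<phi> L2_diff[OF L2(1,3)]])
  then show ?thesis by auto
qed

theorem lemma5p5:
  fixes V :: "(real ^ 'n) set"
    and \<beta> \<zeta> :: "real \<Rightarrow> real"
    and ws :: "nat \<Rightarrow> real ^ 'n \<Rightarrow> real"
    and \<beta>bar \<zeta>bar \<phi> w :: "real ^ 'n \<Rightarrow> real"
  assumes V_meas: "V \<in> sets lebesgue" and V_ne: "V \<noteq> {}"
    and \<beta>_cont: "continuous_on UNIV \<beta>" and \<beta>_mono: "mono \<beta>" and \<beta>0: "\<beta> 0 = 0"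
    and \<zeta>_cont: "continuous_on UNIV \<zeta>" and \<zeta>_mono: "mono \<zeta>" and \<zeta>0: "\<zeta> 0 = 0"
    and ws_meas: "\<And>m. ws m \<in> borel_measurable (lebesgue_on V)"
    and \<beta>bar_L2: "L2 (lebesgue_on V) \<beta>bar" and \<zeta>bar_L2: "L2 (lebesgue_on V) \<zeta>bar"
    and \<beta>_weak: "weak_L2_conv (lebesgue_on V) (\<lambda>m x. \<beta> (ws m x)) \<beta>bar"
    and \<zeta>_weak: "weak_L2_conv (lebesgue_on V) (\<lambda>m x. \<zeta> (ws m x)) \<zeta>bar"
    and \<phi>_Linf: "Linf (lebesgue_on V) \<phi>"
    and \<phi>_pos: "AE x in lebesgue_on V. \<phi> x > 0"
    and lim: "(\<lambda>m. \<integral>x. \<phi> x * \<beta> (ws m x) * \<zeta> (ws m x) \<partial>lebesgue_on V)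
               \<longlonglongrightarrow> (\<integral>x. \<phi> x * \<beta>bar x * \<zeta>bar x \<partial>lebesgue_on V)"
    and w_meas: "w \<in> borel_measurable (lebesgue_on V)"
    and w_eq: "AE x in lebesgue_on V. \<beta> (w x) + \<zeta> (w x) = \<beta>bar x + \<zeta>bar x"
  shows "(AE x in lebesgue_on V. \<beta>bar x = \<beta> (w x)) \<and> (AE x in lebesgue_on V. \<zeta>bar x = \<zeta> (w x))"
proof -
  let ?M = "lebesgue_on V"
  have sum_L2: "L2 ?M (\<lambda>x. \<beta>bar x + \<zeta>bar x)" using L2_add[OF \<beta>bar_L2 \<zeta>bar_L2] .
  have b_L2: "L2 ?M (\<lambda>x. \<beta> (w x))"
    by (rule L2_mono_comp_if_sum_L2[OF \<beta>_mono \<zeta>_mono \<beta>0 \<zeta>0 \<beta>_cont w_meas sum_L2 w_eq])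
  have z_L2: "L2 ?M (\<lambda>x. \<zeta> (w x))"
    using w_eq by (intro L2_mono_comp_if_sum_L2[OF \<zeta>_mono \<beta>_mono \<zeta>0 \<beta>0 \<zeta>_cont w_meas sum_L2])
      (simp add: add.commute)
  have "0 \<le> (\<integral>x. \<phi> x * (\<beta>bar x - \<beta> (w x)) * (\<zeta>bar x - \<zeta> (w x)) \<partial>?M)"
    using \<phi>_pos by (intro weak_L2_conv_Minty_inequality[OF \<beta>_mono \<zeta>_mono \<beta>_weak \<zeta>_weak \<phi>_Linf _ lim
        b_L2 z_L2]) auto
  then have "AE x in ?M. \<beta>bar x = \<beta> (w x)"
    using w_eq by (intro AE_eq_if_weighted_cross_integral_nonneg[OF \<phi>_Linf \<phi>_pos
        \<beta>bar_L2 \<zeta>bar_L2 b_L2 z_L2]) auto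
  with w_eq show ?thesis by auto
qed

end
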